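(* Let $\Psi\colon V\to W$ be a morphism of FI-modules and let $E\geq 0$. Assume that $W$ is centrally stable starting at $E$, that $V$ is boundedly generated in degree $E$, and that for all finite sets $J\subset\mathbb{N}$ with $|J|\leq E$ the map $\Psi_J\colon V_J\to W_J$ is an isomorphism. Then $\Psi$ is an isomorphism, i.e. $\Psi_J$ is an isomorphism for every finite $J\subset\mathbb{N}$.
   Context: $\mathrm{FI}$ is the category of finite subsets of $\mathbb{N}$ and injections. An FI-module $W$ is a functor from $\mathrm{FI}$ to abelian groups: abelian groups $W_I$ and homomorphisms $W_f\colon W_I\to W_J$ for injections $f$, functorially. For $I\subset J$ write $W_I^J=W_f$ for the inclusion $f$. A morphism $\Psi\colon V\to W$ is a natural transformation (maps $\Psi_I\colon V_I\to W_I$ commuting with all $V_f,W_f$). $W$ is boundedly generated in degree $A$ if for every finite $J$, the map $\bigoplus_{I\subset J,|I|\leq A}W_I\to W_J$ induced by the $W_I^J$ is surjective. For finite $J$, let $\eta\colon\bigoplus_{K\subset J,|K|=|J|-2}W_K\to\bigoplus_{I\subset J,|I|=|J|-1}W_I$ send $x\in W_K$ to $(W_K^{I_1}(x),-W_K^{I_2}(x))\in W_{I_1}\oplus W_{I_2}$, where $I_1,I_2$ are the two sets with $K\subset I_i\subset J$, $|I_i|=|J|-1$. The $J$-central stabilization $\widetilde{W}_J$ is the cokernel of $\eta$; the maps $W_I^J$ induce a natural map $\widetilde{W}_J\to W_J$. $W$ is centrally stable starting at $E$ if $\widetilde{W}_J\to W_J$ is an isomorphism for every finite $J$ with $|J|>E$.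 *)

theory Defs
  imports "HOL-Algebra.Algebra"
begin

text \<open>An FI-module is given by abelian groups G I (for finite I \<subseteq> \<nat>), written
  multiplicatively as HOL-Algebra groups, and maps F I J f : G I \<rightarrow> G J for every
  injection f : I \<rightarrow> J (a function nat \<Rightarrow> nat that is injective on I with image in J;
  only its values on I matter).\<close>

definition FI_inj :: "nat set \<Rightarrow> nat set \<Rightarrow> (nat \<Rightarrow> nat) \<Rightarrow> bool" where
  "FI_inj I J f \<longleftrightarrow> finite I \<and> finite J \<and> inj_on f I \<and> f ` I \<subseteq> J"

definition FI_module ::
  "(nat set \<Rightarrow> ('a, 'c) monoid_scheme) \<Rightarrow> (nat set \<Rightarrow> nat set \<Rightarrow> (nat \<Rightarrow> nat) \<Rightarrow> 'a \<Rightarrow> 'a) \<Rightarrow> bool"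
  where
  "FI_module G F \<longleftrightarrow>
     (\<forall>I. finite I \<longrightarrow> comm_group (G I)) \<and>
     (\<forall>I J f. FI_inj I J f \<longrightarrow> F I J f \<in> hom (G I) (G J)) \<and>
     (\<forall>I J f g x. FI_inj I J f \<longrightarrow> (\<forall>i\<in>I. f i = g i) \<longrightarrow> x \<in> carrier (G I)
        \<longrightarrow> F I J f x = F I J g x) \<and>
     (\<forall>I x. finite I \<longrightarrow> x \<in> carrier (G I) \<longrightarrow> F I I id x = x) \<and>
     (\<forall>I J K f g x. FI_inj I J f \<longrightarrow> FI_inj J K g \<longrightarrow> x \<in> carrier (G I)
        \<longrightarrow> F I K (g \<circ> f) x = F J K g (F I J f x))"

definition incl :: "(nat set \<Rightarrow> nat set \<Rightarrow> (nat \<Rightarrow> nat) \<Rightarrow> 'a \<Rightarrow> 'a) \<Rightarrow> nat set \<Rightarrow> nat set \<Rightarrow> 'a \<Rightarrow> 'a"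
  where "incl F I J = F I J id"

definition FI_morphism ::
  "(nat set \<Rightarrow> ('a, 'c) monoid_scheme) \<Rightarrow> (nat set \<Rightarrow> nat set \<Rightarrow> (nat \<Rightarrow> nat) \<Rightarrow> 'a \<Rightarrow> 'a) \<Rightarrow>
   (nat set \<Rightarrow> ('b, 'd) monoid_scheme) \<Rightarrow> (nat set \<Rightarrow> nat set \<Rightarrow> (nat \<Rightarrow> nat) \<Rightarrow> 'b \<Rightarrow> 'b) \<Rightarrow>
   (nat set \<Rightarrow> 'a \<Rightarrow> 'b) \<Rightarrow> bool" where
  "FI_morphism V FV W FW \<Psi> \<longleftrightarrow>
     FI_module V FV \<and> FI_module W FW \<and>
     (\<forall>I. finite I \<longrightarrow> \<Psi> I \<in> hom (V I) (W I)) \<and>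
     (\<forall>I J f x. FI_inj I J f \<longrightarrow> x \<in> carrier (V I) \<longrightarrow> \<Psi> J (FV I J f x) = FW I J f (\<Psi> I x))"

definition sum_map ::
  "(nat set \<Rightarrow> ('a, 'c) monoid_scheme) \<Rightarrow> (nat set \<Rightarrow> nat set \<Rightarrow> (nat \<Rightarrow> nat) \<Rightarrow> 'a \<Rightarrow> 'a) \<Rightarrow>
   nat set set \<Rightarrow> nat set \<Rightarrow> (nat set \<Rightarrow> 'a) \<Rightarrow> 'a" where
  "sum_map G F S J x = finprod (G J) (\<lambda>I. incl F I J (x I)) S"

definition boundedly_generated ::
  "(nat set \<Rightarrow> ('a, 'c) monoid_scheme) \<Rightarrow> (nat set \<Rightarrow> nat set \<Rightarrow> (nat \<Rightarrow> nat) \<Rightarrow> 'a \<Rightarrow> 'a) \<Rightarrow> nat \<Rightarrow> bool"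
  where
  "boundedly_generated G F A \<longleftrightarrow>
     (\<forall>J. finite J \<longrightarrow>
        sum_map G F {I. I \<subseteq> J \<and> card I \<le> A} J
          ` carrier (product_group {I. I \<subseteq> J \<and> card I \<le> A} G) = carrier (G J))"

definition codim1 :: "nat set \<Rightarrow> nat set set" where
  "codim1 J = {I. I \<subseteq> J \<and> card I + 1 = card J}"
definition codim2 :: "nat set \<Rightarrow> nat set set" where
  "codim2 J = {K. K \<subseteq> J \<and> card K + 2 = card J}"

text \<open>The map eta. For K of size |J|-2, the two sets in between are
  I_1 = K \<union> {Min (J - K)} and I_2 = K \<union> {Max (J - K)}; x \<in> W_K goes to
  (W_K^{I_1} x, - W_K^{I_2} x).\<close>
definition eta ::
  "(nat set \<Rightarrow> ('a, 'c) monoid_scheme) \<Rightarrow> (nat set \<Rightarrow> nat set \<Rightarrow> (nat \<Rightarrow> nat) \<Rightarrow> 'a \<Rightarrow> 'a) \<Rightarrow>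
   nat set \<Rightarrow> (nat set \<Rightarrow> 'a) \<Rightarrow> (nat set \<Rightarrow> 'a)" where
  "eta G F J y = (\<lambda>I\<in>codim1 J.
      finprod (G I)
        (\<lambda>K. if I = K \<union> {Min (J - K)} then incl F K I (y K) else inv\<^bsub>G I\<^esub> (incl F K I (y K)))
        {K \<in> codim2 J. K \<subseteq> I})"

definition central_stab ::
  "(nat set \<Rightarrow> ('a, 'c) monoid_scheme) \<Rightarrow> (nat set \<Rightarrow> nat set \<Rightarrow> (nat \<Rightarrow> nat) \<Rightarrow> 'a \<Rightarrow> 'a) \<Rightarrow>
   nat set \<Rightarrow> (nat set \<Rightarrow> 'a) set monoid" where
  "central_stab G F J =
     product_group (codim1 J) G Mod (eta G F J ` carrier (product_group (codim2 J) G))"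

definition central_stab_map ::
  "(nat set \<Rightarrow> ('a, 'c) monoid_scheme) \<Rightarrow> (nat set \<Rightarrow> nat set \<Rightarrow> (nat \<Rightarrow> nat) \<Rightarrow> 'a \<Rightarrow> 'a) \<Rightarrow>
   nat set \<Rightarrow> (nat set \<Rightarrow> 'a) set \<Rightarrow> 'a" where
  "central_stab_map G F J C = sum_map G F (codim1 J) J (SOME x. x \<in> C)"

definition centrally_stable ::
  "(nat set \<Rightarrow> ('a, 'c) monoid_scheme) \<Rightarrow> (nat set \<Rightarrow> nat set \<Rightarrow> (nat \<Rightarrow> nat) \<Rightarrow> 'a \<Rightarrow> 'a) \<Rightarrow> nat \<Rightarrow> bool"
  where
  "centrally_stable G F E \<longleftrightarrow>
     (\<forall>J. finite J \<longrightarrow> card J > E \<longrightarrow>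
        central_stab_map G F J \<in> iso (central_stab G F J) (G J))"

end

theory Submission
  imports Defs
begin

text \<open>Induction on \<open>|J|\<close>; for \<open>|J| \<le> E\<close> there is nothing to prove. For \<open>|J| > E\<close>,
  central stability presents \<open>W_J\<close> as the quotient of the sum of the \<open>W_I\<close> over the \<open>I \<subseteq> J\<close>
  of codimension one by the image of \<open>\<eta>\<close>, and bounded generation presents \<open>V_J\<close> as a quotient
  of the corresponding sum of the \<open>V_I\<close>, since every generating \<open>I\<close> with \<open>|I| \<le> E\<close> lies in
  some \<open>I\<close> of codimension one. By induction \<open>\<Psi>\<close> is an isomorphism in codimensions one and two.
  Lifting generators gives surjectivity. For injectivity, a kernel element of \<open>V_J\<close> written
  over codimension one maps to an element of the image of \<open>\<eta>\<close> for \<open>W\<close>; it lifts through the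
  codimension-two isomorphisms to the image of \<open>\<eta>\<close> for \<open>V\<close>, which dies in \<open>V_J\<close> because each
  \<open>K\<close> of codimension two lies in exactly two \<open>I\<close>, whose contributions cancel.\<close>

lemma comm_group_hom_finprod:
  assumes G: "comm_group G" and H: "comm_group H" and h: "h \<in> hom G H"
    and f: "f \<in> A \<rightarrow> carrier G"
  shows "h (finprod G f A) = finprod H (\<lambda>i. h (f i)) A"
proof -
  interpret G: comm_group G by fact
  interpret H: comm_group H by fact
  interpret group_hom G H h
    using h by (simp add: group_hom_def group_hom_axioms_def G.is_group H.is_group)
  show ?thesis using f
    by (induction A rule: infinite_finite_induct) (auto simp: Pi_iff)
qed

lemma (in comm_monoid) finprod_swap:
  assumes "finite A" "finite B" "\<And>i j. i \<in> A \<Longrightarrow> j \<in> B \<Longrightarrow> f i j \<in> carrier G"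
  shows "(\<Otimes>i\<in>A. \<Otimes>j\<in>B. f i j) = (\<Otimes>j\<in>B. \<Otimes>i\<in>A. f i j)"
  using assms
proof (induction A rule: finite_induct)
  case (insert a A)
  have "(\<Otimes>i\<in>insert a A. \<Otimes>j\<in>B. f i j) = (\<Otimes>j\<in>B. f a j) \<otimes> (\<Otimes>j\<in>B. \<Otimes>i\<in>A. f i j)"
    using insert by (simp add: Pi_iff)
  also have "\<dots> = (\<Otimes>j\<in>B. f a j \<otimes> (\<Otimes>i\<in>A. f i j))"
    using insert by (simp add: Pi_iff)
  also have "\<dots> = (\<Otimes>j\<in>B. \<Otimes>i\<in>insert a A. f i j)"
    using insert by (intro finprod_cong') (auto simp: Pi_iff)
  finally show ?case .
qed (simp add: finprod_one_eqI)

lemma (in comm_monoid) finprod_fibres: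
  assumes "finite A" "finite B" "c \<in> A \<rightarrow> B" "f \<in> A \<rightarrow> carrier G"
  shows "finprod G f A = (\<Otimes>b\<in>B. finprod G f {a \<in> A. c a = b})"
proof -
  have "finprod G f (\<Union>b\<in>B. {a \<in> A. c a = b}) = (\<Otimes>b\<in>B. finprod G f {a \<in> A. c a = b})"
    using assms by (intro finprod_UN_disjoint) (auto simp: pairwise_def disjnt_def)
  moreover have "(\<Union>b\<in>B. {a \<in> A. c a = b}) = A"
    using assms(3) by auto
  ultimately show ?thesis by simp
qed

lemma FI_module_comm_group: "FI_module G F \<Longrightarrow> finite I \<Longrightarrow> comm_group (G I)"
  by (simp add: FI_module_def)

lemma FI_inj_subset: "K \<subseteq> I \<Longrightarrow> finite I \<Longrightarrow> FI_inj K I id"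
  by (auto simp: FI_inj_def intro: finite_subset)

lemma FI_module_comp:
  "FI_module G F \<Longrightarrow> FI_inj I J f \<Longrightarrow> FI_inj J K g \<Longrightarrow> x \<in> carrier (G I) \<Longrightarrow>
    F I K (g \<circ> f) x = F J K g (F I J f x)"
  by (simp add: FI_module_def)

lemma incl_group_hom:
  assumes "FI_module G F" "K \<subseteq> I" "finite I"
  shows "group_hom (G K) (G I) (incl F K I)"
proof -
  have "comm_group (G K)" "comm_group (G I)"
    using FI_module_comm_group[OF assms(1)] finite_subset[OF assms(2,3)] assms(3) by simp_all
  moreover have "incl F K I \<in> hom (G K) (G I)"
    using assms FI_inj_subset by (simp add: FI_module_def incl_def)
  ultimately show ?thesis
    by (simp add: group_hom_def group_hom_axioms_def comm_group.axioms(2))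
qed

lemma incl_closed:
  assumes "FI_module G F" "K \<subseteq> I" "finite I" "x \<in> carrier (G K)"
  shows "incl F K I x \<in> carrier (G I)"
  using group_hom.hom_closed[OF incl_group_hom[OF assms(1-3)] assms(4)] .

lemma incl_incl:
  assumes "FI_module G F" "K \<subseteq> I" "I \<subseteq> J" "finite J" "x \<in> carrier (G K)"
  shows "incl F I J (incl F K I x) = incl F K J x"
proof -
  have "FI_inj K I id" "FI_inj I J id"
    using assms(2-4) finite_subset[OF assms(3,4)] FI_inj_subset by simp_all
  from FI_module_comp[OF assms(1) this assms(5)] show ?thesis
    by (simp add: incl_def)
qed

lemma FI_morphism_group_hom:
  assumes "FI_morphism V FV W FW \<Psi>" "finite I"
  shows "group_hom (V I) (W I) (\<Psi> I)"
  using assms FI_module_comm_group[of V FV I] FI_module_comm_group[of W FW I]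
  by (simp add: FI_morphism_def group_hom_def group_hom_axioms_def comm_group.axioms(2))

lemma FI_morphism_incl:
  "FI_morphism V FV W FW \<Psi> \<Longrightarrow> I \<subseteq> J \<Longrightarrow> finite J \<Longrightarrow> x \<in> carrier (V I) \<Longrightarrow>
    \<Psi> J (incl FV I J x) = incl FW I J (\<Psi> I x)"
  by (simp add: FI_morphism_def FI_inj_subset incl_def)

lemma finite_family_of_subsets: "(\<And>I. I \<in> S \<Longrightarrow> I \<subseteq> J) \<Longrightarrow> finite J \<Longrightarrow> finite S"
proof -
  assume "\<And>I. I \<in> S \<Longrightarrow> I \<subseteq> J" "finite J"
  then have "S \<subseteq> Pow J" "finite (Pow J)" by auto
  then show "finite S" by (rule finite_subset)
qed

lemma codim1_subset: "I \<in> codim1 J \<Longrightarrow> I \<subseteq> J"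
  by (simp add: codim1_def)

lemma codim2_subset: "K \<in> codim2 J \<Longrightarrow> K \<subseteq> J"
  by (simp add: codim2_def)

lemma finite_codim1: "finite J \<Longrightarrow> finite (codim1 J)"
  using finite_family_of_subsets[OF codim1_subset] .

lemma finite_codim2: "finite J \<Longrightarrow> finite (codim2 J)"
  using finite_family_of_subsets[OF codim2_subset] .

lemma codim1_superset:
  assumes "finite J" "I \<subseteq> J" "I \<noteq> J"
  obtains I' where "I' \<in> codim1 J" "I \<subseteq> I'"
proof -
  obtain a where a: "a \<in> J" "a \<notin> I" using assms(2,3) by blast
  have "card J = Suc (card (J - {a}))"
    using card.remove[OF assms(1) a(1)] .
  then have "J - {a} \<in> codim1 J"
    by (simp add: codim1_def)
  then show thesis
    using a assms(2) by (intro that[of "J - {a}"]) auto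
qed

lemma codim2_between:
  assumes J: "finite J" and K: "K \<in> codim2 J"
  obtains a b where "a \<noteq> b" "J - K = {a, b}" "{I \<in> codim1 J. K \<subseteq> I} = {insert a K, insert b K}"
proof -
  have KJ: "K \<subseteq> J" and card_K: "card K + 2 = card J" using K by (auto simp: codim2_def)
  have fin_K: "finite K" using finite_subset[OF KJ J] .
  have "card (J - K) = 2" using card_Diff_subset[OF fin_K KJ] card_K by simp
  then obtain a b where ab: "J - K = {a, b}" "a \<noteq> b" by (auto simp: card_2_iff)
  have "{I \<in> codim1 J. K \<subseteq> I} = {insert a K, insert b K}"
  proof (intro equalityI subsetI)
    fix I assume "I \<in> {I \<in> codim1 J. K \<subseteq> I}"
    then have IJ: "I \<subseteq> J" and card_I: "card I + 1 = card J" and KI: "K \<subseteq> I"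
      by (auto simp: codim1_def)
    have "card (I - K) = 1" using card_Diff_subset[OF fin_K KI] card_I card_K by simp
    then obtain c where c: "I - K = {c}" by (auto simp: card_Suc_eq)
    then have "c \<in> {a, b}" "I = insert c K" using IJ KI ab(1) by blast+
    then show "I \<in> {insert a K, insert b K}" by auto
  next
    fix I assume "I \<in> {insert a K, insert b K}"
    then obtain c where c: "c \<in> J" "c \<notin> K" "I = insert c K" using ab(1) by auto
    then have "card I = card K + 1" using fin_K by simp
    then show "I \<in> {I \<in> codim1 J. K \<subseteq> I}" using c KJ card_K by (auto simp: codim1_def)
  qed
  with ab show thesis using that by blast
qed

lemma FI_module_product_group:
  assumes "FI_module G F" "finite J" "\<And>I. I \<in> S \<Longrightarrow> I \<subseteq> J"
  shows "group (product_group S G)"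
proof (rule product_group)
  fix I assume "I \<in> S"
  show "group (G I)"
    using FI_module_comm_group[OF assms(1) finite_subset[OF assms(3)[OF \<open>I \<in> S\<close>] assms(2)]]
    by (rule comm_group.axioms(2))
qed

lemma sum_map_group_hom:
  assumes M: "FI_module G F" and J: "finite J" and S: "\<And>I. I \<in> S \<Longrightarrow> I \<subseteq> J"
  shows "group_hom (product_group S G) (G J) (sum_map G F S J)"
proof -
  interpret GJ: comm_group "G J" using M J FI_module_comm_group by blast
  have incl_x: "(\<lambda>I. incl F I J (x I)) \<in> S \<rightarrow> carrier (G J)" if "x \<in> carrier (product_group S G)" for x
    using that incl_closed[OF M S J] by auto
  have "sum_map G F S J (x \<otimes>\<^bsub>product_group S G\<^esub> y) = sum_map G F S J x \<otimes>\<^bsub>G J\<^esub> sum_map G F S J y"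
    if x: "x \<in> carrier (product_group S G)" and y: "y \<in> carrier (product_group S G)" for x y
  proof -
    have "sum_map G F S J (x \<otimes>\<^bsub>product_group S G\<^esub> y) =
        (\<Otimes>\<^bsub>G J\<^esub>I\<in>S. incl F I J (x I) \<otimes>\<^bsub>G J\<^esub> incl F I J (y I))"
      unfolding sum_map_def using incl_x[OF x] incl_x[OF y]
    proof (intro GJ.finprod_cong')
      fix I assume I: "I \<in> S"
      have "x I \<in> carrier (G I)" "y I \<in> carrier (G I)"
        using PiE_mem[OF x[unfolded carrier_product_group] I] PiE_mem[OF y[unfolded carrier_product_group] I] by simp_all
      then show "incl F I J ((x \<otimes>\<^bsub>product_group S G\<^esub> y) I) = incl F I J (x I) \<otimes>\<^bsub>G J\<^esub> incl F I J (y I)"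
        using group_hom.hom_mult[OF incl_group_hom[OF M S[OF I] J]] I by simp
    qed auto
    then show ?thesis
      unfolding sum_map_def using incl_x[OF x] incl_x[OF y] by simp
  qed
  then have "sum_map G F S J \<in> hom (product_group S G) (G J)"
    unfolding sum_map_def using incl_x by (intro homI) auto
  then show ?thesis
    using FI_module_product_group[OF M J S] by (simp add: group_hom_def group_hom_axioms_def GJ.is_group)
qed

lemma FI_morphism_sum_map:
  assumes P: "FI_morphism V FV W FW \<Psi>" and J: "finite J" and S: "\<And>I. I \<in> S \<Longrightarrow> I \<subseteq> J"
    and x: "\<And>I. I \<in> S \<Longrightarrow> x I \<in> carrier (V I)" and y: "\<And>I. I \<in> S \<Longrightarrow> \<Psi> I (x I) = y I"
  shows "\<Psi> J (sum_map V FV S J x) = sum_map W FW S J y"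
proof -
  have MV: "FI_module V FV" and MW: "FI_module W FW" using P by (auto simp: FI_morphism_def)
  interpret VJ: comm_group "V J" using MV J FI_module_comm_group by blast
  interpret WJ: comm_group "W J" using MW J FI_module_comm_group by blast
  have y_closed: "y I \<in> carrier (W I)" if "I \<in> S" for I
    using group_hom.hom_closed[OF FI_morphism_group_hom[OF P finite_subset[OF S[OF that] J]] x[OF that]]
    by (simp add: y[OF that])
  have "\<Psi> J (sum_map V FV S J x) = (\<Otimes>\<^bsub>W J\<^esub>I\<in>S. \<Psi> J (incl FV I J (x I)))"
    unfolding sum_map_def using incl_closed[OF MV S J x] P J
    by (intro comm_group_hom_finprod VJ.comm_group_axioms WJ.comm_group_axioms)
       (auto simp: FI_morphism_def)
  also have "\<dots> = sum_map W FW S J y"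
    unfolding sum_map_def using incl_closed[OF MW S J y_closed]
    by (intro WJ.finprod_cong') (auto simp: FI_morphism_incl[OF P S J x] y)
  finally show ?thesis .
qed

lemma sum_map_regroup:
  assumes M: "FI_module G F" and J: "finite J"
    and T: "\<And>I'. I' \<in> T \<Longrightarrow> I' \<subseteq> J" and c: "\<And>I. I \<in> S \<Longrightarrow> c I \<in> T \<and> I \<subseteq> c I"
    and g: "g \<in> carrier (product_group S G)"
  obtains u where "u \<in> carrier (product_group T G)" "sum_map G F S J g = sum_map G F T J u"
proof -
  interpret GJ: comm_group "G J" using M J FI_module_comm_group by blast
  have finite_T: "finite T" using finite_family_of_subsets[OF T J] .
  have S_sub: "I \<subseteq> J" if "I \<in> S" for I using c[OF that] T by blast
  have finite_S: "finite S" using finite_family_of_subsets[OF S_sub J] .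
  have g_closed: "g I \<in> carrier (G I)" if "I \<in> S" for I
    using PiE_mem[OF g[unfolded carrier_product_group] that] by simp
  have incl_g: "incl F I J (g I) \<in> carrier (G J)" if "I \<in> S" for I
    using incl_closed[OF M S_sub[OF that] J g_closed[OF that]] .
  define u where "u = (\<lambda>I'\<in>T. finprod (G I') (\<lambda>I. incl F I I' (g I)) {I \<in> S. c I = I'})"
  have fibre_closed: "(\<lambda>I. incl F I I' (g I)) \<in> {I \<in> S. c I = I'} \<rightarrow> carrier (G I')" if "I' \<in> T" for I'
    using incl_closed[OF M _ finite_subset[OF T[OF that] J] g_closed] c by auto
  have "u \<in> carrier (product_group T G)"
  proof -
    have "u I' \<in> carrier (G I')" if I': "I' \<in> T" for I'
    proof -
      interpret comm_group "G I'" using FI_module_comm_group[OF M finite_subset[OF T[OF I'] J]] .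
      show ?thesis unfolding u_def using I' fibre_closed[OF I'] by simp
    qed
    then show ?thesis by (simp add: u_def)
  qed
  moreover have "sum_map G F T J u = sum_map G F S J g"
  proof -
    have "sum_map G F T J u = (\<Otimes>\<^bsub>G J\<^esub>I'\<in>T. \<Otimes>\<^bsub>G J\<^esub>I\<in>{I \<in> S. c I = I'}. incl F I J (g I))"
      unfolding sum_map_def
    proof (intro GJ.finprod_cong')
      fix I' assume I': "I' \<in> T"
      have "incl F I' J (u I') = (\<Otimes>\<^bsub>G J\<^esub>I\<in>{I \<in> S. c I = I'}. incl F I' J (incl F I I' (g I)))"
        using I' comm_group_hom_finprod[OF FI_module_comm_group[OF M finite_subset[OF T[OF I'] J]]
            GJ.comm_group_axioms group_hom.homh[OF incl_group_hom[OF M T[OF I'] J]] fibre_closed[OF I']]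
        by (simp add: u_def)
      also have "\<dots> = (\<Otimes>\<^bsub>G J\<^esub>I\<in>{I \<in> S. c I = I'}. incl F I J (g I))"
        using incl_incl[OF M _ T[OF I'] J g_closed] c incl_g by (intro GJ.finprod_cong') auto
      finally show "incl F I' J (u I') = \<dots>" .
    next
      show "(\<lambda>I'. \<Otimes>\<^bsub>G J\<^esub>I\<in>{I \<in> S. c I = I'}. incl F I J (g I)) \<in> T \<rightarrow> carrier (G J)"
        using incl_g by (auto intro!: GJ.finprod_closed)
    qed simp
    also have "\<dots> = sum_map G F S J g"
      unfolding sum_map_def using finite_S finite_T c incl_g
      by (intro GJ.finprod_fibres[symmetric]) auto
    finally show ?thesis .
  qed
  ultimately show thesis using that by metis
qed

lemma boundedly_generated_codim1:
  assumes M: "FI_module G F" and bg: "boundedly_generated G F E" and J: "finite J"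
    and E: "E < card J"
  shows "sum_map G F (codim1 J) J ` carrier (product_group (codim1 J) G) = carrier (G J)"
proof
  show "sum_map G F (codim1 J) J ` carrier (product_group (codim1 J) G) \<subseteq> carrier (G J)"
    using group_hom.hom_closed[OF sum_map_group_hom[OF M J codim1_subset]] by blast
next
  define S where "S = {I. I \<subseteq> J \<and> card I \<le> E}"
  have "\<exists>I'. I' \<in> codim1 J \<and> I \<subseteq> I'" if "I \<in> S" for I
  proof -
    have "I \<subseteq> J" "I \<noteq> J" using that E by (auto simp: S_def)
    then show ?thesis using codim1_superset[OF J] by metis
  qed
  then obtain c where c: "\<And>I. I \<in> S \<Longrightarrow> c I \<in> codim1 J \<and> I \<subseteq> c I"
    by metis
  show "carrier (G J) \<subseteq> sum_map G F (codim1 J) J ` carrier (product_group (codim1 J) G)"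
  proof
    fix x assume "x \<in> carrier (G J)"
    then obtain g where g: "g \<in> carrier (product_group S G)" "x = sum_map G F S J g"
      using bg J unfolding boundedly_generated_def S_def by blast
    obtain u where "u \<in> carrier (product_group (codim1 J) G)" "sum_map G F S J g = sum_map G F (codim1 J) J u"
      using sum_map_regroup[OF M J codim1_subset c g(1)] .
    then show "x \<in> sum_map G F (codim1 J) J ` carrier (product_group (codim1 J) G)"
      using g(2) by blast
  qed
qed

lemma eta_closed:
  assumes M: "FI_module G F" and J: "finite J" and k: "k \<in> carrier (product_group (codim2 J) G)"
  shows "eta G F J k \<in> carrier (product_group (codim1 J) G)"
proof -
  have "eta G F J k I \<in> carrier (G I)" if I: "I \<in> codim1 J" for I
  proof -
    have fin_I: "finite I" using finite_subset[OF codim1_subset[OF I] J] .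
    interpret comm_group "G I" using FI_module_comm_group[OF M fin_I] .
    have "incl F K I (k K) \<in> carrier (G I)" if "K \<in> codim2 J" "K \<subseteq> I" for K
      using incl_closed[OF M that(2) fin_I PiE_mem[OF k[unfolded carrier_product_group] that(1)]] by simp
    then show ?thesis
      using I by (auto simp: eta_def intro!: finprod_closed)
  qed
  then show ?thesis by (simp add: eta_def)
qed

lemma eta_one:
  assumes M: "FI_module G F" and J: "finite J"
  shows "eta G F J \<one>\<^bsub>product_group (codim2 J) G\<^esub> = \<one>\<^bsub>product_group (codim1 J) G\<^esub>"
proof -
  have "eta G F J \<one>\<^bsub>product_group (codim2 J) G\<^esub> I = \<one>\<^bsub>G I\<^esub>" if I: "I \<in> codim1 J" for I
  proof -
    have fin_I: "finite I" using finite_subset[OF codim1_subset[OF I] J] .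
    interpret comm_group "G I" using FI_module_comm_group[OF M fin_I] .
    have "incl F K I \<one>\<^bsub>G K\<^esub> = \<one>\<^bsub>G I\<^esub>" if "K \<subseteq> I" for K
      using group_hom.hom_one[OF incl_group_hom[OF M that fin_I]] .
    then show ?thesis
      using I by (auto simp: eta_def intro!: finprod_one_eqI)
  qed
  then show ?thesis by (auto simp: eta_def)
qed

lemma FI_morphism_eta:
  assumes P: "FI_morphism V FV W FW \<Psi>" and J: "finite J" and I: "I \<in> codim1 J"
    and m: "\<And>K. K \<in> codim2 J \<Longrightarrow> m K \<in> carrier (V K)"
    and k: "\<And>K. K \<in> codim2 J \<Longrightarrow> \<Psi> K (m K) = k K"
  shows "\<Psi> I (eta V FV J m I) = eta W FW J k I"
proof -
  have MV: "FI_module V FV" and MW: "FI_module W FW" using P by (auto simp: FI_morphism_def)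
  have fin_I: "finite I" using finite_subset[OF codim1_subset[OF I] J] .
  interpret VI: comm_group "V I" using FI_module_comm_group[OF MV fin_I] .
  interpret WI: comm_group "W I" using FI_module_comm_group[OF MW fin_I] .
  interpret \<Psi>: group_hom "V I" "W I" "\<Psi> I" using FI_morphism_group_hom[OF P fin_I] .
  define A where "A = {K \<in> codim2 J. K \<subseteq> I}"
  have incl_m: "incl FV K I (m K) \<in> carrier (V I)" if "K \<in> A" for K
    using that incl_closed[OF MV _ fin_I m] by (simp add: A_def)
  have \<Psi>_incl_m: "\<Psi> I (incl FV K I (m K)) = incl FW K I (k K)" if "K \<in> A" for K
    using that FI_morphism_incl[OF P _ fin_I m] k by (simp add: A_def)
  define s where "s = (\<lambda>K. if I = K \<union> {Min (J - K)} then incl FV K I (m K) else inv\<^bsub>V I\<^esub> incl FV K I (m K))"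
  have s_closed: "s \<in> A \<rightarrow> carrier (V I)"
    using incl_m by (auto simp: s_def)
  have "\<Psi> I (eta V FV J m I) = \<Psi> I (finprod (V I) s A)"
    using I by (simp add: eta_def s_def A_def)
  also have "\<dots> = (\<Otimes>\<^bsub>W I\<^esub>K\<in>A. \<Psi> I (s K))"
    using comm_group_hom_finprod[OF VI.comm_group_axioms WI.comm_group_axioms \<Psi>.homh s_closed] .
  also have "\<dots> = (\<Otimes>\<^bsub>W I\<^esub>K\<in>A. if I = K \<union> {Min (J - K)} then incl FW K I (k K) else inv\<^bsub>W I\<^esub> incl FW K I (k K))"
  proof (rule WI.finprod_cong')
    have "incl FW K I (k K) \<in> carrier (W I)" if "K \<in> A" for K
      using \<Psi>.hom_closed[OF incl_m[OF that]] by (simp add: \<Psi>_incl_m[OF that])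
    then show "(\<lambda>K. if I = K \<union> {Min (J - K)} then incl FW K I (k K) else inv\<^bsub>W I\<^esub> incl FW K I (k K))
        \<in> A \<rightarrow> carrier (W I)"
      by (simp only: Pi_iff if_split_mem1) blast
  next
    fix K assume K: "K \<in> A"
    show "\<Psi> I (s K) = (if I = K \<union> {Min (J - K)} then incl FW K I (k K) else inv\<^bsub>W I\<^esub> incl FW K I (k K))"
      unfolding s_def if_distrib[of "\<Psi> I"] \<Psi>.hom_inv[OF incl_m[OF K]] \<Psi>_incl_m[OF K] ..
  qed simp
  also have "\<dots> = eta W FW J k I"
    using I by (simp add: eta_def A_def)
  finally show ?thesis .
qed

lemma sum_map_eta:
  assumes M: "FI_module G F" and J: "finite J" and k: "k \<in> carrier (product_group (codim2 J) G)"
  shows "sum_map G F (codim1 J) J (eta G F J k) = \<one>\<^bsub>G J\<^esub>"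
proof -
  interpret GJ: comm_group "G J" using FI_module_comm_group[OF M J] .
  have k_closed: "k K \<in> carrier (G K)" if "K \<in> codim2 J" for K
    using PiE_mem[OF k[unfolded carrier_product_group] that] by simp
  have incl_k: "incl F K J (k K) \<in> carrier (G J)" if "K \<in> codim2 J" for K
    using incl_closed[OF M codim2_subset[OF that] J k_closed[OF that]] .
  define t where "t = (\<lambda>I K. if K \<subseteq> I then (if I = K \<union> {Min (J - K)} then incl F K J (k K)
      else inv\<^bsub>G J\<^esub> incl F K J (k K)) else \<one>\<^bsub>G J\<^esub>)"
  have t_closed: "t I K \<in> carrier (G J)" if "K \<in> codim2 J" for I K
    using incl_k[OF that] by (simp add: t_def)
  have incl_eta: "incl F I J (eta G F J k I) = (\<Otimes>\<^bsub>G J\<^esub>K\<in>codim2 J. t I K)" if I: "I \<in> codim1 J" for I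
  proof -
    have IJ: "I \<subseteq> J" using codim1_subset[OF I] .
    have fin_I: "finite I" using finite_subset[OF IJ J] .
    interpret GI: comm_group "G I" using FI_module_comm_group[OF M fin_I] .
    define A where "A = {K \<in> codim2 J. K \<subseteq> I}"
    define s where "s = (\<lambda>K. if I = K \<union> {Min (J - K)} then incl F K I (k K) else inv\<^bsub>G I\<^esub> incl F K I (k K))"
    have incl_k_I: "incl F K I (k K) \<in> carrier (G I)" if "K \<in> A" for K
      using that incl_closed[OF M _ fin_I k_closed] by (simp add: A_def)
    have s_closed: "s \<in> A \<rightarrow> carrier (G I)"
      using incl_k_I by (auto simp: s_def)
    have "incl F I J (eta G F J k I) = incl F I J (finprod (G I) s A)"
      using I by (simp add: eta_def s_def A_def)
    also have "\<dots> = (\<Otimes>\<^bsub>G J\<^esub>K\<in>A. incl F I J (s K))"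
      using comm_group_hom_finprod[OF GI.comm_group_axioms GJ.comm_group_axioms
          group_hom.homh[OF incl_group_hom[OF M IJ J]] s_closed] .
    also have "\<dots> = (\<Otimes>\<^bsub>G J\<^esub>K\<in>A. t I K)"
    proof (rule GJ.finprod_cong')
      show "t I \<in> A \<rightarrow> carrier (G J)" using t_closed by (auto simp: A_def)
    next
      fix K assume K: "K \<in> A"
      then have KI: "K \<subseteq> I" and k_K: "k K \<in> carrier (G K)" using k_closed by (auto simp: A_def)
      show "incl F I J (s K) = t I K"
        using incl_incl[OF M KI IJ J k_K] group_hom.hom_inv[OF incl_group_hom[OF M IJ J] incl_k_I[OF K]] KI
        by (simp only: s_def t_def if_distrib[of "incl F I J"] if_True)
    qed simp
    also have "\<dots> = (\<Otimes>\<^bsub>G J\<^esub>K\<in>codim2 J. t I K)"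
      using finite_codim2[OF J] t_closed by (intro GJ.finprod_mono_neutral_cong_left) (auto simp: A_def t_def)
    finally show ?thesis .
  qed
  have cancel: "(\<Otimes>\<^bsub>G J\<^esub>I\<in>codim1 J. t I K) = \<one>\<^bsub>G J\<^esub>" if K: "K \<in> codim2 J" for K
  proof -
    obtain a b where ab: "a \<noteq> b" "J - K = {a, b}" "{I \<in> codim1 J. K \<subseteq> I} = {insert a K, insert b K}"
      using codim2_between[OF J K] .
    have distinct: "insert a K \<noteq> insert b K" using ab(1,2) by auto
    have "(\<Otimes>\<^bsub>G J\<^esub>I\<in>codim1 J. t I K) = (\<Otimes>\<^bsub>G J\<^esub>I\<in>{I \<in> codim1 J. K \<subseteq> I}. t I K)"
      using finite_codim1[OF J] t_closed[OF K] by (intro GJ.finprod_mono_neutral_cong_right) (auto simp: t_def)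
    also have "\<dots> = t (insert a K) K \<otimes>\<^bsub>G J\<^esub> t (insert b K) K"
      using ab(3) distinct t_closed[OF K] by simp
    also have "\<dots> = \<one>\<^bsub>G J\<^esub>"
    proof -
      have "Min (J - K) \<in> {a, b}" using ab(2) by (simp add: min_def)
      then show ?thesis
        using distinct incl_k[OF K] by (auto simp: t_def GJ.m_comm subset_insertI)
    qed
    finally show ?thesis .
  qed
  have "sum_map G F (codim1 J) J (eta G F J k) = (\<Otimes>\<^bsub>G J\<^esub>I\<in>codim1 J. \<Otimes>\<^bsub>G J\<^esub>K\<in>codim2 J. t I K)"
    unfolding sum_map_def using incl_eta t_closed by (intro GJ.finprod_cong') (auto simp: eta_def)
  also have "\<dots> = (\<Otimes>\<^bsub>G J\<^esub>K\<in>codim2 J. \<Otimes>\<^bsub>G J\<^esub>I\<in>codim1 J. t I K)"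
    using finite_codim1[OF J] finite_codim2[OF J] t_closed by (intro GJ.finprod_swap)
  also have "\<dots> = \<one>\<^bsub>G J\<^esub>"
    by (rule GJ.finprod_one_eqI) (rule cancel)
  finally show ?thesis .
qed

text \<open>The representative picked by \<open>central_stab_map\<close> differs from \<open>a\<close> by an element of
  the image of \<open>\<eta>\<close>, which \<open>sum_map\<close> kills.\<close>

lemma central_stab_map_rcoset:
  assumes M: "FI_module G F" and J: "finite J" and a: "a \<in> carrier (product_group (codim1 J) G)"
  shows "central_stab_map G F J
      (eta G F J ` carrier (product_group (codim2 J) G) #>\<^bsub>product_group (codim1 J) G\<^esub> a)
    = sum_map G F (codim1 J) J a"
proof -
  let ?P1 = "product_group (codim1 J) G" and ?P2 = "product_group (codim2 J) G"
  let ?H = "eta G F J ` carrier ?P2"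
  interpret \<Sigma>: group_hom ?P1 "G J" "sum_map G F (codim1 J) J"
    using sum_map_group_hom[OF M J codim1_subset] .
  interpret P2: group ?P2
    using FI_module_product_group[OF M J codim2_subset] .
  have "eta G F J \<one>\<^bsub>?P2\<^esub> \<otimes>\<^bsub>?P1\<^esub> a \<in> ?H #>\<^bsub>?P1\<^esub> a"
    unfolding r_coset_def by blast
  then have "(SOME z. z \<in> ?H #>\<^bsub>?P1\<^esub> a) \<in> ?H #>\<^bsub>?P1\<^esub> a"
    by (rule someI[where P = "\<lambda>z. z \<in> ?H #>\<^bsub>?P1\<^esub> a"])
  then obtain k where k: "k \<in> carrier ?P2" "(SOME z. z \<in> ?H #>\<^bsub>?P1\<^esub> a) = eta G F J k \<otimes>\<^bsub>?P1\<^esub> a"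
    unfolding r_coset_def by blast
  have "sum_map G F (codim1 J) J (eta G F J k \<otimes>\<^bsub>?P1\<^esub> a) = sum_map G F (codim1 J) J a"
    using \<Sigma>.hom_mult[OF eta_closed[OF M J k(1)] a] sum_map_eta[OF M J k(1)] \<Sigma>.hom_closed[OF a]
    by simp
  then show ?thesis
    unfolding central_stab_map_def k(2) .
qed

lemma carrier_central_stab:
  "carrier (central_stab G F J) =
    rcosets\<^bsub>product_group (codim1 J) G\<^esub> (eta G F J ` carrier (product_group (codim2 J) G))"
  by (simp add: central_stab_def FactGroup_def)

lemma central_stab_map_iso_imp_surj:
  assumes M: "FI_module G F" and J: "finite J"
    and cs: "central_stab_map G F J \<in> iso (central_stab G F J) (G J)"
  shows "sum_map G F (codim1 J) J ` carrier (product_group (codim1 J) G) = carrier (G J)"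
proof
  show "sum_map G F (codim1 J) J ` carrier (product_group (codim1 J) G) \<subseteq> carrier (G J)"
    using group_hom.hom_closed[OF sum_map_group_hom[OF M J codim1_subset]] by blast
next
  show "carrier (G J) \<subseteq> sum_map G F (codim1 J) J ` carrier (product_group (codim1 J) G)"
  proof
    fix w assume "w \<in> carrier (G J)"
    then obtain C where "C \<in> carrier (central_stab G F J)" "w = central_stab_map G F J C"
      using cs by (auto simp: iso_iff)
    then obtain a where "a \<in> carrier (product_group (codim1 J) G)" "w = sum_map G F (codim1 J) J a"
      unfolding carrier_central_stab RCOSETS_def using central_stab_map_rcoset[OF M J] by auto
    then show "w \<in> sum_map G F (codim1 J) J ` carrier (product_group (codim1 J) G)"
      by blast
  qed
qed

lemma central_stab_map_iso_imp_kernel: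
  assumes M: "FI_module G F" and J: "finite J"
    and cs: "central_stab_map G F J \<in> iso (central_stab G F J) (G J)"
    and y: "y \<in> carrier (product_group (codim1 J) G)"
    and y_one: "sum_map G F (codim1 J) J y = \<one>\<^bsub>G J\<^esub>"
  shows "y \<in> eta G F J ` carrier (product_group (codim2 J) G)"
proof -
  let ?P1 = "product_group (codim1 J) G" and ?P2 = "product_group (codim2 J) G"
  let ?H = "eta G F J ` carrier ?P2"
  interpret \<Sigma>: group_hom ?P1 "G J" "sum_map G F (codim1 J) J"
    using sum_map_group_hom[OF M J codim1_subset] .
  interpret P2: group ?P2
    using FI_module_product_group[OF M J codim2_subset] .
  have H: "?H \<subseteq> carrier ?P1" "\<one>\<^bsub>?P1\<^esub> \<in> ?H"
    using eta_closed[OF M J] eta_one[OF M J] P2.one_closed by (blast, metis image_eqI)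
  have "?H #>\<^bsub>?P1\<^esub> y \<in> carrier (central_stab G F J)" "?H #>\<^bsub>?P1\<^esub> \<one>\<^bsub>?P1\<^esub> \<in> carrier (central_stab G F J)"
    unfolding carrier_central_stab using \<Sigma>.G.rcosetsI[OF H(1)] y \<Sigma>.G.one_closed by blast+
  moreover have "central_stab_map G F J (?H #>\<^bsub>?P1\<^esub> y) = central_stab_map G F J (?H #>\<^bsub>?P1\<^esub> \<one>\<^bsub>?P1\<^esub>)"
    by (simp only: central_stab_map_rcoset[OF M J y] central_stab_map_rcoset[OF M J \<Sigma>.G.one_closed]
        y_one \<Sigma>.hom_one)
  ultimately have "?H #>\<^bsub>?P1\<^esub> y = ?H #>\<^bsub>?P1\<^esub> \<one>\<^bsub>?P1\<^esub>"
    using cs by (auto simp: iso_iff inj_on_def)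
  moreover have "y \<in> ?H #>\<^bsub>?P1\<^esub> y"
    using \<Sigma>.G.rcosI[OF H(2) H(1) y] unfolding \<Sigma>.G.l_one[OF y] .
  ultimately show ?thesis
    using \<Sigma>.G.coset_mult_one[OF H(1)] by simp
qed

lemma product_preimage_of_isos:
  assumes iso: "\<And>I. I \<in> S \<Longrightarrow> \<Psi> I \<in> iso (V I) (W I)" and y: "y \<in> carrier (product_group S W)"
  shows "\<exists>x \<in> carrier (product_group S V). \<forall>I\<in>S. \<Psi> I (x I) = y I"
proof -
  have "\<exists>v \<in> carrier (V I). \<Psi> I v = y I" if "I \<in> S" for I
    using iso[OF that] PiE_mem[OF y[unfolded carrier_product_group] that] by (force simp: iso_iff)
  then obtain x where x: "\<And>I. I \<in> S \<Longrightarrow> x I \<in> carrier (V I) \<and> \<Psi> I (x I) = y I"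
    by metis
  then have "restrict x S \<in> carrier (product_group S V) \<and> (\<forall>I\<in>S. \<Psi> I (restrict x S I) = y I)"
    by auto
  then show ?thesis by blast
qed

lemma FI_morphism_surj_from_codim1:
  assumes P: "FI_morphism V FV W FW \<Psi>" and J: "finite J"
    and gen: "sum_map W FW (codim1 J) J ` carrier (product_group (codim1 J) W) = carrier (W J)"
    and iso: "\<And>I. I \<in> codim1 J \<Longrightarrow> \<Psi> I \<in> iso (V I) (W I)"
  shows "\<Psi> J ` carrier (V J) = carrier (W J)"
proof
  show "\<Psi> J ` carrier (V J) \<subseteq> carrier (W J)"
    using group_hom.hom_closed[OF FI_morphism_group_hom[OF P J]] by blast
next
  have MV: "FI_module V FV" using P by (simp add: FI_morphism_def)
  show "carrier (W J) \<subseteq> \<Psi> J ` carrier (V J)"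
  proof
    fix w assume "w \<in> carrier (W J)"
    then obtain y where y: "y \<in> carrier (product_group (codim1 J) W)" "w = sum_map W FW (codim1 J) J y"
      using gen by blast
    obtain x where x: "x \<in> carrier (product_group (codim1 J) V)" "\<forall>I \<in> codim1 J. \<Psi> I (x I) = y I"
      using product_preimage_of_isos[OF iso y(1)] by blast
    have "\<Psi> J (sum_map V FV (codim1 J) J x) = w"
      using FI_morphism_sum_map[where S = "codim1 J" and y = y, OF P J codim1_subset] x y(2) by auto
    then show "w \<in> \<Psi> J ` carrier (V J)"
      using group_hom.hom_closed[OF sum_map_group_hom[OF MV J codim1_subset] x(1)] by blast
  qed
qed

lemma FI_morphism_eta_preimage:
  assumes P: "FI_morphism V FV W FW \<Psi>" and J: "finite J"
    and iso1: "\<And>I. I \<in> codim1 J \<Longrightarrow> \<Psi> I \<in> iso (V I) (W I)"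
    and iso2: "\<And>K. K \<in> codim2 J \<Longrightarrow> \<Psi> K \<in> iso (V K) (W K)"
    and u: "u \<in> carrier (product_group (codim1 J) V)" and k: "k \<in> carrier (product_group (codim2 J) W)"
    and u_k: "\<And>I. I \<in> codim1 J \<Longrightarrow> \<Psi> I (u I) = eta W FW J k I"
  shows "u \<in> eta V FV J ` carrier (product_group (codim2 J) V)"
proof -
  have MV: "FI_module V FV" using P by (simp add: FI_morphism_def)
  obtain m where m: "m \<in> carrier (product_group (codim2 J) V)" "\<forall>K \<in> codim2 J. \<Psi> K (m K) = k K"
    using product_preimage_of_isos[OF iso2 k] by blast
  have m_closed: "m K \<in> carrier (V K)" if "K \<in> codim2 J" for K
    using PiE_mem[OF m(1)[unfolded carrier_product_group] that] by simp
  have eta_m: "eta V FV J m \<in> (\<Pi>\<^sub>E I\<in>codim1 J. carrier (V I))"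
    using eta_closed[OF MV J m(1)] by simp
  have "u = eta V FV J m"
  proof (rule PiE_ext[OF u[unfolded carrier_product_group] eta_m])
    fix I assume I: "I \<in> codim1 J"
    have "\<Psi> I (u I) = \<Psi> I (eta V FV J m I)"
      using FI_morphism_eta[OF P J I m_closed] m(2) u_k[OF I] by simp
    then show "u I = eta V FV J m I"
      using iso1[OF I] PiE_mem[OF u[unfolded carrier_product_group] I] PiE_mem[OF eta_m I]
      by (auto simp: iso_iff inj_on_def)
  qed
  then show ?thesis
    using m(1) by blast
qed

lemma FI_morphism_inj_from_smaller:
  assumes P: "FI_morphism V FV W FW \<Psi>" and J: "finite J"
    and gen: "sum_map V FV (codim1 J) J ` carrier (product_group (codim1 J) V) = carrier (V J)"
    and cs: "central_stab_map W FW J \<in> iso (central_stab W FW J) (W J)"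
    and iso: "\<And>I. I \<subseteq> J \<Longrightarrow> card I < card J \<Longrightarrow> \<Psi> I \<in> iso (V I) (W I)"
  shows "inj_on (\<Psi> J) (carrier (V J))"
proof -
  have MV: "FI_module V FV" and MW: "FI_module W FW" using P by (auto simp: FI_morphism_def)
  interpret \<Psi>: group_hom "V J" "W J" "\<Psi> J" using FI_morphism_group_hom[OF P J] .
  have iso1: "\<Psi> I \<in> iso (V I) (W I)" if "I \<in> codim1 J" for I
    using that iso by (simp add: codim1_def)
  have iso2: "\<Psi> K \<in> iso (V K) (W K)" if "K \<in> codim2 J" for K
    using that iso by (simp add: codim2_def)
  have "x = \<one>\<^bsub>V J\<^esub>" if x: "x \<in> carrier (V J)" "\<Psi> J x = \<one>\<^bsub>W J\<^esub>" for x
  proof -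
    obtain u where u: "u \<in> carrier (product_group (codim1 J) V)" "x = sum_map V FV (codim1 J) J u"
      using gen x(1) by blast
    define y where "y = (\<lambda>I\<in>codim1 J. \<Psi> I (u I))"
    have u_closed: "u I \<in> carrier (V I)" if "I \<in> codim1 J" for I
      using PiE_mem[OF u(1)[unfolded carrier_product_group] that] by simp
    have y: "y \<in> carrier (product_group (codim1 J) W)"
      using group_hom.hom_closed[OF FI_morphism_group_hom[OF P finite_subset[OF codim1_subset J]] u_closed]
      by (simp add: y_def)
    have "sum_map W FW (codim1 J) J y = \<Psi> J x"
      using FI_morphism_sum_map[where S = "codim1 J" and y = y, OF P J codim1_subset u_closed] u(2)
      by (simp add: y_def)
    then obtain k where k: "k \<in> carrier (product_group (codim2 J) W)" "y = eta W FW J k"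
      using central_stab_map_iso_imp_kernel[OF MW J cs y] x(2) by auto
    have "\<Psi> I (u I) = eta W FW J k I" if "I \<in> codim1 J" for I
      using fun_cong[OF k(2), of I] that by (simp add: y_def)
    then obtain m where "m \<in> carrier (product_group (codim2 J) V)" "u = eta V FV J m"
      using FI_morphism_eta_preimage[OF P J iso1 iso2 u(1) k(1)] by blast
    then show ?thesis
      using u(2) sum_map_eta[OF MV J] by simp
  qed
  then show ?thesis
    using \<Psi>.inj_iff_trivial_ker by (auto simp: kernel_def)
qed

lemma FI_morphism_iso_step:
  assumes P: "FI_morphism V FV W FW \<Psi>" and J: "finite J"
    and gen: "sum_map V FV (codim1 J) J ` carrier (product_group (codim1 J) V) = carrier (V J)"
    and cs: "central_stab_map W FW J \<in> iso (central_stab W FW J) (W J)"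
    and iso: "\<And>I. I \<subseteq> J \<Longrightarrow> card I < card J \<Longrightarrow> \<Psi> I \<in> iso (V I) (W I)"
  shows "\<Psi> J \<in> iso (V J) (W J)"
proof -
  have MW: "FI_module W FW" using P by (simp add: FI_morphism_def)
  have "\<Psi> J ` carrier (V J) = carrier (W J)"
    using FI_morphism_surj_from_codim1[OF P J central_stab_map_iso_imp_surj[OF MW J cs]] iso
    by (simp add: codim1_def)
  then show ?thesis
    using FI_morphism_inj_from_smaller[OF assms] P J by (simp add: iso_iff FI_morphism_def)
qed

theorem lemma2p23:
  fixes V :: "nat set \<Rightarrow> ('a, 'c) monoid_scheme"
    and FV :: "nat set \<Rightarrow> nat set \<Rightarrow> (nat \<Rightarrow> nat) \<Rightarrow> 'a \<Rightarrow> 'a"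
    and W :: "nat set \<Rightarrow> ('b, 'd) monoid_scheme"
    and FW :: "nat set \<Rightarrow> nat set \<Rightarrow> (nat \<Rightarrow> nat) \<Rightarrow> 'b \<Rightarrow> 'b"
    and \<Psi> :: "nat set \<Rightarrow> 'a \<Rightarrow> 'b"
    and E :: nat
  assumes "FI_morphism V FV W FW \<Psi>"
    and "centrally_stable W FW E"
    and "boundedly_generated V FV E"
    and "\<And>J. finite J \<Longrightarrow> card J \<le> E \<Longrightarrow> \<Psi> J \<in> iso (V J) (W J)"
  shows "\<forall>J. finite J \<longrightarrow> \<Psi> J \<in> iso (V J) (W J)"
proof (intro allI impI)
  fix J :: "nat set"
  assume "finite J"
  then show "\<Psi> J \<in> iso (V J) (W J)"
  proof (induction "card J" arbitrary: J rule: less_induct)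
    case less
    show ?case
    proof (cases "card J \<le> E")
      case True
      then show ?thesis using assms(4) less.prems by blast
    next
      case False
      have "FI_module V FV" using assms(1) by (simp add: FI_morphism_def)
      from boundedly_generated_codim1[OF this assms(3) less.prems] False
      have "sum_map V FV (codim1 J) J ` carrier (product_group (codim1 J) V) = carrier (V J)"
        by simp
      moreover have "central_stab_map W FW J \<in> iso (central_stab W FW J) (W J)"
        using assms(2) less.prems False by (simp add: centrally_stable_def)
      ultimately show ?thesis
        using FI_morphism_iso_step[OF assms(1) less.prems] less.hyps finite_subset less.prems by blast
    qed
  qed
qed

end
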